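(* Let $\Lambda$ be a row-finite, cofinal $k$-graph with no sources and $R$ a commutative ring with $1$. Let $a$ be a nonzero element of the center $Z(\mathrm{KP}_R(\Lambda))$, written in normal form $a=\sum_{(\alpha,\beta)\in F}r_{\alpha,\beta}s_\alpha s_{\beta^*}$. Then $\{v\in\Lambda^0: v=r(\beta)\text{ for some }(\alpha,\beta)\in F\}=\Lambda^0$.
   Context: A $k$-graph is a countable category $\Lambda$ with a functor $d:\Lambda\to\mathbb{N}^k$ ($\mathbb{N}^k$ a one-object category under addition) with unique factorization: whenever $d(\lambda)=m+n$ there are unique $\mu,\nu$ with $d(\mu)=m,d(\nu)=n,\lambda=\mu\nu$. $\Lambda^0$ = vertices (degree-$0$ morphisms), $\Lambda^n=d^{-1}(n)$, $r,s$ range and source, $v\Lambda^n=\{\lambda\in\Lambda^n:r(\lambda)=v\}$. Row-finite: $v\Lambda^n$ finite; no sources: $v\Lambda^n\ne\emptyset$. An infinite path is a degree-preserving functor $x$ from $\Omega_k$ (objects $\mathbb{N}^k$, morphisms $(m,n)$ with $m\le n$, $r(m,n)=m$, $s(m,n)=n$, $d(m,n)=n-m$) to $\Lambda$; $x(m):=x(m,m)$. Cofinal: for every infinite path $x$ and vertex $v$ there are $m$ and a path $\lambda$ with $r(\lambda)=v$, $s(\lambda)=x(m)$. Kumjian-Pask $\Lambda$-family in an $R$-algebra $A$: $P:\Lambda^0\to A$, $S:\Lambda^{\ne0}\cup\{\lambda^*:\lambda\in\Lambda^{\neq0}\}\to A$ with (KP1) $P_v$ mutually orthogonal idempotents; (KP2)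 for $r(\mu)=s(\lambda)$: $S_\lambda S_\mu=S_{\lambda\mu}$, $S_{\mu^*}S_{\lambda^*}=S_{(\lambda\mu)^*}$, $P_{r(\lambda)}S_\lambda=S_\lambda=S_\lambda P_{s(\lambda)}$, $P_{s(\lambda)}S_{\lambda^*}=S_{\lambda^*}=S_{\lambda^*}P_{r(\lambda)}$; (KP3) $S_{\lambda^*}S_\mu=\delta_{\lambda,\mu}P_{s(\lambda)}$ when $d(\lambda)=d(\mu)$; (KP4) $P_v=\sum_{\lambda\in v\Lambda^n}S_\lambda S_{\lambda^*}$ for $n\ne0$. $\mathrm{KP}_R(\Lambda)$ is the $R$-algebra generated by a universal such family $(p,s)$; $s_v=s_{v^*}=p_v$ for vertices $v$. Normal form: $a=\sum_{(\alpha,\beta)\in F}r_{\alpha,\beta}s_\alpha s_{\beta^*}$ with $F\subset\Lambda\times\Lambda^m$ finite for some $m\in\mathbb{N}^k$, all $r_{\alpha,\beta}\in R\setminus\{0\}$, and $s(\alpha)=s(\beta)$ for all $(\alpha,\beta)\in F$. *)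

theory Defs
  imports Main "HOL-Library.Countable_Set"
begin

text \<open>Degrees live in N^k, represented as functions 'k => nat for a finite index
type 'k (so k = CARD('k)). A k-graph is given by its set of morphisms L, range and
source maps r s (to identity morphisms = vertices), a partial composition c
(meaningful when s lam = r mu) and the degree functor d.\<close>

type_synonym 'k deg = "'k \<Rightarrow> nat"

definition dadd :: "'k deg \<Rightarrow> 'k deg \<Rightarrow> 'k deg" where
  "dadd m n = (\<lambda>i. m i + n i)"

definition dsub :: "'k deg \<Rightarrow> 'k deg \<Rightarrow> 'k deg" where
  "dsub m n = (\<lambda>i. m i - n i)"

definition dzero :: "'k deg" where
  "dzero = (\<lambda>i. 0)"

definition is_kgraph ::
  "'m set \<Rightarrow> ('m \<Rightarrow> 'm) \<Rightarrow> ('m \<Rightarrow> 'm) \<Rightarrow> ('m \<Rightarrow> 'm \<Rightarrow> 'm) \<Rightarrow> ('m \<Rightarrow> ('k::finite) deg) \<Rightarrow> bool"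
where
  "is_kgraph L r s c d \<longleftrightarrow>
     countable L
   \<comment> \<open>range and source are identity morphisms\<close>
   \<and> (\<forall>l\<in>L. r l \<in> L \<and> s l \<in> L
        \<and> r (r l) = r l \<and> s (r l) = r l \<and> r (s l) = s l \<and> s (s l) = s l)
   \<comment> \<open>identity laws\<close>
   \<and> (\<forall>l\<in>L. c (r l) l = l \<and> c l (s l) = l)
   \<comment> \<open>composition\<close>
   \<and> (\<forall>l\<in>L. \<forall>m\<in>L. s l = r m \<longrightarrow>
        c l m \<in> L \<and> r (c l m) = r l \<and> s (c l m) = s m)
   \<and> (\<forall>l\<in>L. \<forall>m\<in>L. \<forall>n\<in>L. s l = r m \<and> s m = r n \<longrightarrow> c (c l m) n = c l (c m n))
   \<comment> \<open>d is a functor\<close>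
   \<and> (\<forall>l\<in>L. d (r l) = dzero)
   \<and> (\<forall>l\<in>L. \<forall>m\<in>L. s l = r m \<longrightarrow> d (c l m) = dadd (d l) (d m))
   \<comment> \<open>unique factorisation\<close>
   \<and> (\<forall>l\<in>L. \<forall>m n. d l = dadd m n \<longrightarrow>
        (\<exists>!p. fst p \<in> L \<and> snd p \<in> L \<and> s (fst p) = r (snd p)
              \<and> d (fst p) = m \<and> d (snd p) = n \<and> l = c (fst p) (snd p)))"

definition vertices :: "'m set \<Rightarrow> ('m \<Rightarrow> 'k deg) \<Rightarrow> 'm set" where
  "vertices L d = {l\<in>L. d l = dzero}"

definition row_finite :: "'m set \<Rightarrow> ('m \<Rightarrow> 'm) \<Rightarrow> ('m \<Rightarrow> 'k deg) \<Rightarrow> bool" where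
  "row_finite L r d \<longleftrightarrow> (\<forall>v\<in>vertices L d. \<forall>n. finite {l\<in>L. r l = v \<and> d l = n})"

definition no_sources :: "'m set \<Rightarrow> ('m \<Rightarrow> 'm) \<Rightarrow> ('m \<Rightarrow> 'k deg) \<Rightarrow> bool" where
  "no_sources L r d \<longleftrightarrow> (\<forall>v\<in>vertices L d. \<forall>n. {l\<in>L. r l = v \<and> d l = n} \<noteq> {})"

text \<open>Infinite path: degree preserving functor from Omega_k, x m n = x(m,n) for m <= n.\<close>
definition infinite_path ::
  "'m set \<Rightarrow> ('m \<Rightarrow> 'm) \<Rightarrow> ('m \<Rightarrow> 'm) \<Rightarrow> ('m \<Rightarrow> 'm \<Rightarrow> 'm) \<Rightarrow> ('m \<Rightarrow> 'k deg)
    \<Rightarrow> ('k deg \<Rightarrow> 'k deg \<Rightarrow> 'm) \<Rightarrow> bool"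
where
  "infinite_path L r s c d x \<longleftrightarrow>
     (\<forall>m n. m \<le> n \<longrightarrow> x m n \<in> L \<and> d (x m n) = dsub n m
        \<and> r (x m n) = x m m \<and> s (x m n) = x n n)
   \<and> (\<forall>m n p. m \<le> n \<and> n \<le> p \<longrightarrow> c (x m n) (x n p) = x m p)"

definition kg_cofinal ::
  "'m set \<Rightarrow> ('m \<Rightarrow> 'm) \<Rightarrow> ('m \<Rightarrow> 'm) \<Rightarrow> ('m \<Rightarrow> 'm \<Rightarrow> 'm) \<Rightarrow> ('m \<Rightarrow> 'k deg) \<Rightarrow> bool"
where
  "kg_cofinal L r s c d \<longleftrightarrow>
     (\<forall>x. infinite_path L r s c d x \<longrightarrow>
        (\<forall>v\<in>vertices L d. \<exists>m l. l \<in> L \<and> r l = v \<and> s l = x m m))"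

text \<open>Generators: P v (v a vertex), S l and Sst l (= S_{l*}) for l of nonzero degree.
Elements of the free (non-unital) R-algebra are finitely supported coefficient
functions on nonempty words of valid generators.\<close>

datatype 'm gen = P 'm | S 'm | Sst 'm

type_synonym ('m, 'r) fpoly = "'m gen list \<Rightarrow> 'r"

definition valid_gen :: "'m set \<Rightarrow> ('m \<Rightarrow> 'k deg) \<Rightarrow> 'm gen \<Rightarrow> bool" where
  "valid_gen L d g = (case g of
      P v \<Rightarrow> v \<in> vertices L d
    | S l \<Rightarrow> l \<in> L \<and> d l \<noteq> dzero
    | Sst l \<Rightarrow> l \<in> L \<and> d l \<noteq> dzero)"

definition free_elems :: "'m set \<Rightarrow> ('m \<Rightarrow> 'k deg) \<Rightarrow> ('m, 'r::zero) fpoly set" where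
  "free_elems L d = {f. finite {w. f w \<noteq> 0} \<and> f [] = 0
      \<and> (\<forall>w. f w \<noteq> 0 \<longrightarrow> (\<forall>g\<in>set w. valid_gen L d g))}"

definition wmono :: "'m gen list \<Rightarrow> ('m, 'r::{zero,one}) fpoly" where
  "wmono w = (\<lambda>u. if u = w then 1 else 0)"

definition padd :: "('m, 'r::plus) fpoly \<Rightarrow> ('m, 'r) fpoly \<Rightarrow> ('m, 'r) fpoly" where
  "padd f g = (\<lambda>w. f w + g w)"

definition psub :: "('m, 'r::minus) fpoly \<Rightarrow> ('m, 'r) fpoly \<Rightarrow> ('m, 'r) fpoly" where
  "psub f g = (\<lambda>w. f w - g w)"

definition psmult :: "'r::times \<Rightarrow> ('m, 'r) fpoly \<Rightarrow> ('m, 'r) fpoly" where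
  "psmult a f = (\<lambda>w. a * f w)"

definition pmul :: "('m, 'r::comm_ring_1) fpoly \<Rightarrow> ('m, 'r) fpoly \<Rightarrow> ('m, 'r) fpoly" where
  "pmul f g = (\<lambda>w. \<Sum>i\<le>length w. f (take i w) * g (drop i w))"

definition psum :: "('a \<Rightarrow> ('m, 'r::comm_ring_1) fpoly) \<Rightarrow> 'a set \<Rightarrow> ('m, 'r) fpoly" where
  "psum F A = (\<lambda>w. \<Sum>a\<in>A. F a w)"

text \<open>Word for s_l and s_{l*}, with the convention s_v = s_{v*} = p_v for vertices.\<close>
definition sw :: "('m \<Rightarrow> 'k deg) \<Rightarrow> 'm \<Rightarrow> 'm gen list" where
  "sw d l = (if d l = dzero then [P l] else [S l])"

definition sstw :: "('m \<Rightarrow> 'k deg) \<Rightarrow> 'm \<Rightarrow> 'm gen list" where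
  "sstw d l = (if d l = dzero then [P l] else [Sst l])"

text \<open>The defining relations (KP1)-(KP4), as elements of the free algebra that
are set to zero.\<close>
definition kp_relations ::
  "'m set \<Rightarrow> ('m \<Rightarrow> 'm) \<Rightarrow> ('m \<Rightarrow> 'm) \<Rightarrow> ('m \<Rightarrow> 'm \<Rightarrow> 'm) \<Rightarrow> ('m \<Rightarrow> 'k deg)
     \<Rightarrow> ('m, 'r::comm_ring_1) fpoly set"
where
  "kp_relations L r s c d =
     \<comment> \<open>(KP1)\<close>
     {psub (wmono [P v, P w]) (if v = w then wmono [P v] else (\<lambda>_. 0)) | v w.
        v \<in> vertices L d \<and> w \<in> vertices L d}
   \<union> \<comment> \<open>(KP2)\<close>
     {psub (wmono [S l, S m]) (wmono [S (c l m)]) | l m.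
        l \<in> L \<and> m \<in> L \<and> d l \<noteq> dzero \<and> d m \<noteq> dzero \<and> r m = s l}
   \<union> {psub (wmono [Sst m, Sst l]) (wmono [Sst (c l m)]) | l m.
        l \<in> L \<and> m \<in> L \<and> d l \<noteq> dzero \<and> d m \<noteq> dzero \<and> r m = s l}
   \<union> {psub (wmono [P (r l), S l]) (wmono [S l]) | l. l \<in> L \<and> d l \<noteq> dzero}
   \<union> {psub (wmono [S l, P (s l)]) (wmono [S l]) | l. l \<in> L \<and> d l \<noteq> dzero}
   \<union> {psub (wmono [P (s l), Sst l]) (wmono [Sst l]) | l. l \<in> L \<and> d l \<noteq> dzero}
   \<union> {psub (wmono [Sst l, P (r l)]) (wmono [Sst l]) | l. l \<in> L \<and> d l \<noteq> dzero}
   \<union> \<comment> \<open>(KP3)\<close>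
     {psub (wmono [Sst l, S m]) (if l = m then wmono [P (s l)] else (\<lambda>_. 0)) | l m.
        l \<in> L \<and> m \<in> L \<and> d l \<noteq> dzero \<and> d l = d m}
   \<union> \<comment> \<open>(KP4)\<close>
     {psub (wmono [P v]) (psum (\<lambda>l. wmono [S l, Sst l]) {l\<in>L. r l = v \<and> d l = n}) | v n.
        v \<in> vertices L d \<and> n \<noteq> dzero}"

inductive_set alg_ideal ::
  "'m set \<Rightarrow> ('m \<Rightarrow> 'k deg) \<Rightarrow> ('m, 'r::comm_ring_1) fpoly set \<Rightarrow> ('m, 'r) fpoly set"
  for L d X
where
  zero: "(\<lambda>_. 0) \<in> alg_ideal L d X"
| gen: "f \<in> X \<Longrightarrow> f \<in> alg_ideal L d X"
| add: "f \<in> alg_ideal L d X \<Longrightarrow> g \<in> alg_ideal L d X \<Longrightarrow> padd f g \<in> alg_ideal L d X"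
| smult: "f \<in> alg_ideal L d X \<Longrightarrow> psmult a f \<in> alg_ideal L d X"
| lmul: "f \<in> alg_ideal L d X \<Longrightarrow> \<forall>g\<in>set u. valid_gen L d g
           \<Longrightarrow> pmul (wmono u) f \<in> alg_ideal L d X"
| rmul: "f \<in> alg_ideal L d X \<Longrightarrow> \<forall>g\<in>set u. valid_gen L d g
           \<Longrightarrow> pmul f (wmono u) \<in> alg_ideal L d X"

definition kp_ideal ::
  "'m set \<Rightarrow> ('m \<Rightarrow> 'm) \<Rightarrow> ('m \<Rightarrow> 'm) \<Rightarrow> ('m \<Rightarrow> 'm \<Rightarrow> 'm) \<Rightarrow> ('m \<Rightarrow> 'k deg)
     \<Rightarrow> ('m, 'r::comm_ring_1) fpoly set"
where
  "kp_ideal L r s c d = alg_ideal L d (kp_relations L r s c d)"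

text \<open>KP_R(L) = free_elems / kp_ideal. An element f of free_elems represents
a class [f]; [f] = [g] iff psub f g is in kp_ideal.\<close>

definition kp_eq ::
  "'m set \<Rightarrow> ('m \<Rightarrow> 'm) \<Rightarrow> ('m \<Rightarrow> 'm) \<Rightarrow> ('m \<Rightarrow> 'm \<Rightarrow> 'm) \<Rightarrow> ('m \<Rightarrow> 'k deg)
     \<Rightarrow> ('m, 'r::comm_ring_1) fpoly \<Rightarrow> ('m, 'r) fpoly \<Rightarrow> bool"
where
  "kp_eq L r s c d f g \<longleftrightarrow> psub f g \<in> kp_ideal L r s c d"

definition kp_central ::
  "'m set \<Rightarrow> ('m \<Rightarrow> 'm) \<Rightarrow> ('m \<Rightarrow> 'm) \<Rightarrow> ('m \<Rightarrow> 'm \<Rightarrow> 'm) \<Rightarrow> ('m \<Rightarrow> 'k deg)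
     \<Rightarrow> ('m, 'r::comm_ring_1) fpoly \<Rightarrow> bool"
where
  "kp_central L r s c d f \<longleftrightarrow>
     (\<forall>g\<in>free_elems L d. kp_eq L r s c d (pmul f g) (pmul g f))"

end

theory Submission
  imports Defs
begin

text \<open>Let H be the set of vertices u with p_u a = 0. Since a is central, H is hereditary
  and, by (KP4) and row-finiteness, saturated. If a vertex v were not of the form r(\<beta>), then
  a p_v = 0 by (KP1) and (KP2), so v \<in> H. A vertex outside H would by saturation start an
  infinite path avoiding H, and cofinality connects v to that path, contradicting
  hereditariness. Hence H contains every vertex, and a = \<Sum> p_u a = 0, with u ranging
  over the ranges of the \<alpha>.\<close>

section \<open>The free algebra and its Kumjian-Pask quotient\<close>

lemma pmul_wmono_left:
  "pmul (wmono u) f w =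
     (if \<exists>w'. w = u @ w' then f (drop (length u) w) else (0::'r::comm_ring_1))"
proof -
  have "pmul (wmono u) f w = (\<Sum>i\<le>length w. if i = length u then
      (if take (length u) w = u then f (drop (length u) w) else 0) else 0)"
    unfolding pmul_def wmono_def by (rule sum.cong) auto
  also have "\<dots> = (if take (length u) w = u then f (drop (length u) w) else 0)"
    by (cases "length u \<le> length w")
      (auto simp: sum.delta min_def dest: arg_cong[of _ _ length])
  finally show ?thesis
    by (metis append_eq_conv_conj append_take_drop_id)
qed

lemma pmul_wmono_right:
  "pmul f (wmono u) w =
     (if \<exists>w'. w = w' @ u then f (take (length w - length u) w) else (0::'r::comm_ring_1))"
proof -
  have "pmul f (wmono u) w = (\<Sum>i\<le>length w. if i = length w - length u then
      (if length u \<le> length w \<and> drop (length w - length u) w = u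
       then f (take (length w - length u) w) else 0) else 0)"
    unfolding pmul_def wmono_def by (rule sum.cong) auto
  also have "\<dots> = (if length u \<le> length w \<and> drop (length w - length u) w = u
      then f (take (length w - length u) w) else 0)"
    by (auto simp: sum.delta)
  also have "(length u \<le> length w \<and> drop (length w - length u) w = u) \<longleftrightarrow> (\<exists>w'. w = w' @ u)"
    by (metis append_eq_conv_conj append_take_drop_id diff_diff_cancel diff_le_self
        length_append le_add2 length_drop add_diff_cancel_right')
  finally show ?thesis .
qed

lemma pmul_wmono_wmono: "pmul (wmono u) (wmono u') = (wmono (u @ u') :: ('m, 'r::comm_ring_1) fpoly)"
  by (rule ext, unfold pmul_wmono_left) (auto simp: wmono_def)

lemma pmul_wmono_assoc_left:
  "pmul (wmono u) (pmul (wmono u') f) = pmul (wmono (u @ u')) (f::('m, 'r::comm_ring_1) fpoly)"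
  by (rule ext) (auto simp: pmul_wmono_left)

lemma pmul_wmono_assoc:
  "pmul (wmono u) (pmul f (wmono u')) = pmul (pmul (wmono u) (f::('m, 'r::comm_ring_1) fpoly)) (wmono u')"
proof
  fix w
  show "pmul (wmono u) (pmul f (wmono u')) w = pmul (pmul (wmono u) f) (wmono u') w"
  proof (cases "\<exists>x. w = u @ x @ u'")
    case True
    then show ?thesis by (auto simp: pmul_wmono_left pmul_wmono_right)
  next
    case False
    then have "\<not> ((\<exists>z. drop (length u) w = z @ u') \<and> (\<exists>z. w = u @ z))"
      and "\<not> ((\<exists>z. take (length w - length u') w = u @ z) \<and> (\<exists>z. w = z @ u'))"
      by auto
    then show ?thesis by (simp add: pmul_wmono_left pmul_wmono_right) blast
  qed
qed

lemma pmul_psub_left: "pmul (psub f g) h = psub (pmul f h) (pmul g (h::('m, 'r::comm_ring_1) fpoly))"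
  by (rule ext) (simp add: pmul_def psub_def left_diff_distrib sum_subtractf)

lemma pmul_psub_right: "pmul h (psub f g) = psub (pmul h f) (pmul h (g::('m, 'r::comm_ring_1) fpoly))"
  by (rule ext) (simp add: pmul_def psub_def right_diff_distrib sum_subtractf)

lemma pmul_psmult_left: "pmul (psmult a f) h = psmult a (pmul f (h::('m, 'r::comm_ring_1) fpoly))"
  by (rule ext) (simp add: pmul_def psmult_def sum_distrib_left mult.assoc)

lemma pmul_psmult_right: "pmul h (psmult a f) = psmult a (pmul h (f::('m, 'r::comm_ring_1) fpoly))"
  by (rule ext) (simp add: pmul_def psmult_def sum_distrib_left mult.left_commute)

lemma pmul_zero_left [simp]: "pmul (\<lambda>_. 0) h = (\<lambda>_. (0::'r::comm_ring_1))"
  by (rule ext) (simp add: pmul_def)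

lemma pmul_zero_right [simp]: "pmul h (\<lambda>_. 0) = (\<lambda>_. (0::'r::comm_ring_1))"
  by (rule ext) (simp add: pmul_def)

lemma pmul_psum_left: "pmul (psum F A) h = psum (\<lambda>a. pmul (F a) (h::('m, 'r::comm_ring_1) fpoly)) A"
  by (rule ext) (simp add: pmul_def psum_def sum_distrib_right sum.swap[of _ A])

lemma pmul_psum_right: "pmul h (psum F A) = psum (\<lambda>a. pmul h (F a :: ('m, 'r::comm_ring_1) fpoly)) A"
  by (rule ext) (simp add: pmul_def psum_def sum_distrib_left sum.swap[of _ A])

lemma psum_zero [simp]: "psum (\<lambda>_ _. 0) A = (\<lambda>_. 0::'r::comm_ring_1)"
  by (rule ext) (simp add: psum_def)

lemma psum_cong: "(\<And>a. a \<in> A \<Longrightarrow> F a = G a) \<Longrightarrow> psum F A = psum G A"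
  unfolding psum_def by (intro ext sum.cong refl) auto

lemma psum_psmult_psum_swap:
  "psum (\<lambda>p. psmult (k p) (psum (\<lambda>u. G u p) B)) A = psum (\<lambda>u. psum (\<lambda>p. psmult (k p) (G u p)) A) B"
  by (rule ext) (simp add: psum_def psmult_def sum_distrib_left sum.swap[of _ A])

lemma psum_delta:
  "finite A \<Longrightarrow> x \<in> A \<Longrightarrow> psum (\<lambda>u. if u = x then G else (\<lambda>_. 0)) A = (G :: ('m, 'r::comm_ring_1) fpoly)"
proof (rule ext)
  fix w assume "finite A" "x \<in> A"
  have "psum (\<lambda>u. if u = x then G else (\<lambda>_. 0)) A w = (\<Sum>u\<in>A. if u = x then G w else 0)"
    unfolding psum_def by (rule sum.cong) auto
  also have "\<dots> = G w" using \<open>finite A\<close> \<open>x \<in> A\<close> by simp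
  finally show "psum (\<lambda>u. if u = x then G else (\<lambda>_. 0)) A w = G w" .
qed

text \<open>Unlike free_elems, the empty word may have a nonzero coefficient, so that every
  monomial wmono u with valid letters belongs to this set.\<close>
definition valid_fpolys :: "'m set \<Rightarrow> ('m \<Rightarrow> 'k deg) \<Rightarrow> ('m, 'r::zero) fpoly set" where
  "valid_fpolys L d = {f. finite {w. f w \<noteq> 0} \<and> (\<forall>w. f w \<noteq> 0 \<longrightarrow> (\<forall>g\<in>set w. valid_gen L d g))}"

lemma free_elems_subset_valid_fpolys: "free_elems L d \<subseteq> valid_fpolys L d"
  by (auto simp: free_elems_def valid_fpolys_def)

lemma wmono_valid_fpolys:
  "\<forall>g\<in>set u. valid_gen L d g \<Longrightarrow> (wmono u :: ('m, 'r::comm_ring_1) fpoly) \<in> valid_fpolys L d"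
  by (auto simp: valid_fpolys_def wmono_def)

lemma wmono_single_valid_fpolys:
  "valid_gen L d g \<Longrightarrow> (wmono [g] :: ('m, 'r::comm_ring_1) fpoly) \<in> valid_fpolys L d"
  by (rule wmono_valid_fpolys) simp

lemma valid_fpolys_expansion:
  "h \<in> valid_fpolys L d \<Longrightarrow> h = psum (\<lambda>w. psmult (h w) (wmono w)) {w. h w \<noteq> (0::'r::comm_ring_1)}"
  by (rule ext) (simp add: valid_fpolys_def psum_def psmult_def wmono_def if_distrib cong: if_cong)

lemma pmul_valid_fpolys:
  assumes "h1 \<in> valid_fpolys L d" "h2 \<in> valid_fpolys L d"
  shows "pmul h1 (h2::('m, 'r::comm_ring_1) fpoly) \<in> valid_fpolys L d"
proof -
  have split: "\<exists>a b. w = a @ b \<and> h1 a \<noteq> 0 \<and> h2 b \<noteq> 0" if "pmul h1 h2 w \<noteq> 0" for w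
  proof -
    have "(\<Sum>i\<le>length w. h1 (take i w) * h2 (drop i w)) \<noteq> 0"
      using that by (simp add: pmul_def)
    then obtain i where "h1 (take i w) * h2 (drop i w) \<noteq> 0"
      using sum.not_neutral_contains_not_neutral by blast
    then show ?thesis by (intro exI[of _ "take i w"] exI[of _ "drop i w"]) auto
  qed
  have "{w. pmul h1 h2 w \<noteq> 0} \<subseteq> (\<lambda>(a, b). a @ b) ` ({w. h1 w \<noteq> 0} \<times> {w. h2 w \<noteq> 0})"
    using split by fastforce
  moreover have "finite {w. h1 w \<noteq> 0}" "finite {w. h2 w \<noteq> 0}"
    using assms by (auto simp: valid_fpolys_def)
  ultimately have "finite {w. pmul h1 h2 w \<noteq> 0}"
    by (meson finite_SigmaI finite_imageI finite_subset)
  moreover have "\<forall>g\<in>set w. valid_gen L d g" if "pmul h1 h2 w \<noteq> 0" for w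
    using split[OF that] assms unfolding valid_fpolys_def by force
  ultimately show ?thesis by (simp add: valid_fpolys_def)
qed

lemma alg_ideal_psum:
  "finite A \<Longrightarrow> (\<And>a. a \<in> A \<Longrightarrow> F a \<in> alg_ideal L d X) \<Longrightarrow> psum F A \<in> alg_ideal L d X"
proof (induction A rule: finite_induct)
  case empty
  then show ?case using alg_ideal.zero by (simp add: psum_def)
next
  case (insert x A)
  have "psum F (insert x A) = padd (F x) (psum F A)"
    using insert.hyps by (intro ext) (simp add: psum_def padd_def)
  then show ?case using insert by (simp add: alg_ideal.add)
qed

lemma alg_ideal_pmul_right:
  assumes "f \<in> alg_ideal L d X" "h \<in> valid_fpolys L d"
  shows "pmul f h \<in> alg_ideal L d (X::('m, 'r::comm_ring_1) fpoly set)"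
proof -
  have "pmul f h = psum (\<lambda>w. psmult (h w) (pmul f (wmono w))) {w. h w \<noteq> 0}"
    by (subst valid_fpolys_expansion[OF assms(2)]) (simp add: pmul_psum_right pmul_psmult_right)
  also have "\<dots> \<in> alg_ideal L d X"
    using assms by (intro alg_ideal_psum alg_ideal.smult alg_ideal.rmul) (auto simp: valid_fpolys_def)
  finally show ?thesis .
qed

lemma alg_ideal_pmul_left:
  assumes "f \<in> alg_ideal L d X" "h \<in> valid_fpolys L d"
  shows "pmul h f \<in> alg_ideal L d (X::('m, 'r::comm_ring_1) fpoly set)"
proof -
  have "pmul h f = psum (\<lambda>w. psmult (h w) (pmul (wmono w) f)) {w. h w \<noteq> 0}"
    by (subst valid_fpolys_expansion[OF assms(2)]) (simp add: pmul_psum_left pmul_psmult_left)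
  also have "\<dots> \<in> alg_ideal L d X"
    using assms by (intro alg_ideal_psum alg_ideal.smult alg_ideal.lmul) (auto simp: valid_fpolys_def)
  finally show ?thesis .
qed

lemma kp_eq_refl: "kp_eq L r s c d f (f::('m, 'r::comm_ring_1) fpoly)"
proof -
  have "psub f f = (\<lambda>_. 0)" by (rule ext) (simp add: psub_def)
  then show ?thesis by (simp add: kp_eq_def kp_ideal_def alg_ideal.zero)
qed

lemma kp_eq_sym: "kp_eq L r s c d f (g::('m, 'r::comm_ring_1) fpoly) \<Longrightarrow> kp_eq L r s c d g f"
proof -
  assume "kp_eq L r s c d f g"
  moreover have "psub g f = psmult (-1) (psub f g)" by (rule ext) (simp add: psub_def psmult_def)
  ultimately show ?thesis by (simp add: kp_eq_def kp_ideal_def alg_ideal.smult)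
qed

lemma kp_eq_trans [trans]:
  "kp_eq L r s c d f (g::('m, 'r::comm_ring_1) fpoly) \<Longrightarrow> kp_eq L r s c d g h \<Longrightarrow> kp_eq L r s c d f h"
proof -
  assume "kp_eq L r s c d f g" "kp_eq L r s c d g h"
  moreover have "psub f h = padd (psub f g) (psub g h)" by (rule ext) (simp add: psub_def padd_def)
  ultimately show ?thesis by (simp add: kp_eq_def kp_ideal_def alg_ideal.add)
qed

lemma kp_eq_pmul_right:
  "kp_eq L r s c d f (g::('m, 'r::comm_ring_1) fpoly) \<Longrightarrow> h \<in> valid_fpolys L d
   \<Longrightarrow> kp_eq L r s c d (pmul f h) (pmul g h)"
  unfolding kp_eq_def kp_ideal_def pmul_psub_left[symmetric] by (rule alg_ideal_pmul_right)

lemma kp_eq_pmul_left: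
  "kp_eq L r s c d f (g::('m, 'r::comm_ring_1) fpoly) \<Longrightarrow> h \<in> valid_fpolys L d
   \<Longrightarrow> kp_eq L r s c d (pmul h f) (pmul h g)"
  unfolding kp_eq_def kp_ideal_def pmul_psub_right[symmetric] by (rule alg_ideal_pmul_left)

lemma kp_eq_psmult:
  "kp_eq L r s c d f (g::('m, 'r::comm_ring_1) fpoly) \<Longrightarrow> kp_eq L r s c d (psmult a f) (psmult a g)"
proof -
  assume "kp_eq L r s c d f g"
  moreover have "psub (psmult a f) (psmult a g) = psmult a (psub f g)"
    by (rule ext) (simp add: psub_def psmult_def right_diff_distrib)
  ultimately show ?thesis by (simp add: kp_eq_def kp_ideal_def alg_ideal.smult)
qed

lemma kp_eq_psum:
  "finite A \<Longrightarrow> (\<And>a. a \<in> A \<Longrightarrow> kp_eq L r s c d (F a) (G a :: ('m, 'r::comm_ring_1) fpoly))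
   \<Longrightarrow> kp_eq L r s c d (psum F A) (psum G A)"
proof -
  assume "finite A" "\<And>a. a \<in> A \<Longrightarrow> kp_eq L r s c d (F a) (G a)"
  moreover have "psub (psum F A) (psum G A) = psum (\<lambda>a. psub (F a) (G a)) A"
    by (rule ext) (simp add: psub_def psum_def sum_subtractf)
  ultimately show ?thesis unfolding kp_eq_def kp_ideal_def by (simp add: alg_ideal_psum)
qed

lemma kp_eq_relation:
  "psub f g \<in> kp_relations L r s c d \<Longrightarrow> kp_eq L r s c d f (g::('m, 'r::comm_ring_1) fpoly)"
  by (simp add: kp_eq_def kp_ideal_def alg_ideal.gen)

lemma kp_central_gen:
  "kp_central L r s c d f \<Longrightarrow> valid_gen L d g
   \<Longrightarrow> kp_eq L r s c d (pmul f (wmono [g])) (pmul (wmono [g]) (f::('m, 'r::comm_ring_1) fpoly))"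
  unfolding kp_central_def by (erule bspec) (auto simp: free_elems_def wmono_def)

section \<open>Factorisations and infinite paths in k-graphs\<close>

lemma dadd_dsub: "(m::'k deg) \<le> n \<Longrightarrow> dadd m (dsub n m) = n"
  by (auto simp: dadd_def dsub_def le_fun_def fun_eq_iff)

lemma le_dadd: "(m::'k deg) \<le> dadd m n"
  by (auto simp: dadd_def le_fun_def)

lemma dadd_dzero: "dadd dzero dzero = (dzero::'k deg)"
  by (auto simp: dadd_def dzero_def)

lemma dsub_self: "dsub m m = (dzero::'k deg)"
  by (auto simp: dsub_def dzero_def)

locale kgraph =
  fixes L :: "'m set" and r s :: "'m \<Rightarrow> 'm" and c :: "'m \<Rightarrow> 'm \<Rightarrow> 'm"
    and d :: "'m \<Rightarrow> ('k::finite) deg"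
  assumes kg: "is_kgraph L r s c d"
begin

lemma r_in: "l \<in> L \<Longrightarrow> r l \<in> L" and s_in: "l \<in> L \<Longrightarrow> s l \<in> L"
  and s_r: "l \<in> L \<Longrightarrow> s (r l) = r l" and r_s: "l \<in> L \<Longrightarrow> r (s l) = s l"
  and c_r: "l \<in> L \<Longrightarrow> c (r l) l = l" and c_s: "l \<in> L \<Longrightarrow> c l (s l) = l"
  using kg unfolding is_kgraph_def by blast+

lemma c_in: "l \<in> L \<Longrightarrow> m \<in> L \<Longrightarrow> s l = r m \<Longrightarrow> c l m \<in> L"
  and r_c: "l \<in> L \<Longrightarrow> m \<in> L \<Longrightarrow> s l = r m \<Longrightarrow> r (c l m) = r l"
  and s_c: "l \<in> L \<Longrightarrow> m \<in> L \<Longrightarrow> s l = r m \<Longrightarrow> s (c l m) = s m"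
  and d_c: "l \<in> L \<Longrightarrow> m \<in> L \<Longrightarrow> s l = r m \<Longrightarrow> d (c l m) = dadd (d l) (d m)"
  using kg unfolding is_kgraph_def by blast+

lemma c_assoc:
  "l \<in> L \<Longrightarrow> m \<in> L \<Longrightarrow> n \<in> L \<Longrightarrow> s l = r m \<Longrightarrow> s m = r n \<Longrightarrow> c (c l m) n = c l (c m n)"
  using kg unfolding is_kgraph_def by blast

lemma d_r: "l \<in> L \<Longrightarrow> d (r l) = dzero"
  using kg unfolding is_kgraph_def by blast

lemma unique_factorisation:
  "l \<in> L \<Longrightarrow> d l = dadd m n \<Longrightarrow> \<exists>!p. fst p \<in> L \<and> snd p \<in> L \<and> s (fst p) = r (snd p)
     \<and> d (fst p) = m \<and> d (snd p) = n \<and> l = c (fst p) (snd p)"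
  using kg unfolding is_kgraph_def by blast

lemma d_s: "l \<in> L \<Longrightarrow> d (s l) = dzero"
  by (metis d_r r_s s_in)

lemma vertices_iff: "v \<in> vertices L d \<longleftrightarrow> v \<in> L \<and> d v = dzero"
  by (simp add: vertices_def)

lemma r_vertex: "l \<in> L \<Longrightarrow> r l \<in> vertices L d"
  by (simp add: vertices_iff r_in d_r)

lemma s_vertex: "l \<in> L \<Longrightarrow> s l \<in> vertices L d"
  by (simp add: vertices_iff s_in d_s)

lemma degree_zero_is_vertex:
  assumes "l \<in> L" "d l = dzero"
  shows "r l = l" "s l = l"
proof -
  have "\<exists>!p. fst p \<in> L \<and> snd p \<in> L \<and> s (fst p) = r (snd p)
      \<and> d (fst p) = dzero \<and> d (snd p) = dzero \<and> l = c (fst p) (snd p)"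
    using assms by (intro unique_factorisation) (simp_all add: dadd_dzero)
  moreover have "fst (r l, l) \<in> L \<and> snd (r l, l) \<in> L \<and> s (fst (r l, l)) = r (snd (r l, l))
      \<and> d (fst (r l, l)) = dzero \<and> d (snd (r l, l)) = dzero \<and> l = c (fst (r l, l)) (snd (r l, l))"
    using assms by (simp add: r_in s_r d_r c_r)
  moreover have "fst (l, s l) \<in> L \<and> snd (l, s l) \<in> L \<and> s (fst (l, s l)) = r (snd (l, s l))
      \<and> d (fst (l, s l)) = dzero \<and> d (snd (l, s l)) = dzero \<and> l = c (fst (l, s l)) (snd (l, s l))"
    using assms by (simp add: s_in r_s d_s c_s)
  ultimately have "(r l, l) = (l, s l)" by blast
  then show "r l = l" "s l = l" by auto
qed

definition factor :: "'m \<Rightarrow> 'k deg \<Rightarrow> 'm \<times> 'm" where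
  "factor l m = (THE p. fst p \<in> L \<and> snd p \<in> L \<and> s (fst p) = r (snd p)
     \<and> d (fst p) = m \<and> d (snd p) = dsub (d l) m \<and> l = c (fst p) (snd p))"

lemma factor_unique:
  assumes "l \<in> L" "m \<le> d l" "a \<in> L" "b \<in> L" "s a = r b" "d a = m" "d b = dsub (d l) m" "l = c a b"
  shows "factor l m = (a, b)"
proof -
  have "d l = dadd m (dsub (d l) m)" using assms by (simp add: dadd_dsub)
  from unique_factorisation[OF assms(1) this] show ?thesis
    unfolding factor_def by (rule the1_equality) (use assms in simp)
qed

definition pre :: "'m \<Rightarrow> 'k deg \<Rightarrow> 'm" where "pre l m = fst (factor l m)"
definition suf :: "'m \<Rightarrow> 'k deg \<Rightarrow> 'm" where "suf l m = snd (factor l m)"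

lemma pre_in: "l \<in> L \<Longrightarrow> m \<le> d l \<Longrightarrow> pre l m \<in> L"
  and suf_in: "l \<in> L \<Longrightarrow> m \<le> d l \<Longrightarrow> suf l m \<in> L"
  and s_pre: "l \<in> L \<Longrightarrow> m \<le> d l \<Longrightarrow> s (pre l m) = r (suf l m)"
  and d_pre: "l \<in> L \<Longrightarrow> m \<le> d l \<Longrightarrow> d (pre l m) = m"
  and d_suf: "l \<in> L \<Longrightarrow> m \<le> d l \<Longrightarrow> d (suf l m) = dsub (d l) m"
  and c_pre_suf: "l \<in> L \<Longrightarrow> m \<le> d l \<Longrightarrow> l = c (pre l m) (suf l m)"
proof -
  assume "l \<in> L" "m \<le> d l"
  then have "d l = dadd m (dsub (d l) m)" by (simp add: dadd_dsub)
  from theI'[OF unique_factorisation[OF \<open>l \<in> L\<close> this]]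
  show "pre l m \<in> L" "suf l m \<in> L" "s (pre l m) = r (suf l m)" "d (pre l m) = m"
    "d (suf l m) = dsub (d l) m" "l = c (pre l m) (suf l m)"
    unfolding pre_def suf_def factor_def by blast+
qed

lemma s_suf: "l \<in> L \<Longrightarrow> m \<le> d l \<Longrightarrow> s (suf l m) = s l"
  by (metis c_pre_suf pre_in s_pre s_c suf_in)

lemma pre_pre:
  assumes "l \<in> L" "m \<le> n" "n \<le> d l"
  shows "pre (pre l n) m = pre l m" "suf l m = c (suf (pre l n) m) (suf l n)"
proof -
  define p q where "p = pre l n" and "q = suf l n"
  have p: "p \<in> L" "d p = n" "q \<in> L" "s p = r q" "l = c p q" "d q = dsub (d l) n"
    using assms by (auto simp: p_def q_def pre_in suf_in d_pre s_pre c_pre_suf d_suf)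
  define p1 p2 where "p1 = pre p m" and "p2 = suf p m"
  have pp: "p1 \<in> L" "p2 \<in> L" "s p1 = r p2" "p = c p1 p2" "d p1 = m" "d p2 = dsub n m" "s p2 = s p"
    using assms p by (auto simp: p1_def p2_def pre_in suf_in d_pre s_pre c_pre_suf d_suf s_suf)
  have "factor l m = (p1, c p2 q)"
  proof (rule factor_unique)
    show "m \<le> d l" using assms order_trans by blast
    show "d (c p2 q) = dsub (d l) m" using pp p assms
      by (simp add: d_c) (auto simp: dadd_def dsub_def le_fun_def fun_eq_iff)
  qed (use assms pp p in \<open>auto simp: c_in r_c c_assoc\<close>)
  then show "pre (pre l n) m = pre l m" "suf l m = c (suf (pre l n) m) (suf l n)"
    by (simp_all add: pre_def suf_def p_def q_def p1_def p2_def)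
qed

lemma pre_c:
  assumes "l \<in> L" "\<mu> \<in> L" "s l = r \<mu>" "n \<le> d l"
  shows "pre (c l \<mu>) n = pre l n"
proof -
  have "c l \<mu> = c (pre l n) (c (suf l n) \<mu>)"
    using assms by (metis c_assoc c_pre_suf pre_in s_pre s_suf suf_in)
  then have "factor (c l \<mu>) n = (pre l n, c (suf l n) \<mu>)"
  proof (intro factor_unique)
    show "n \<le> d (c l \<mu>)" using assms by (simp add: d_c) (metis le_dadd order_trans)
    show "d (c (suf l n) \<mu>) = dsub (d (c l \<mu>)) n" using assms
      by (simp add: d_c suf_in s_suf d_suf) (auto simp: dadd_def dsub_def le_fun_def fun_eq_iff)
  qed (use assms in \<open>auto simp: c_in pre_in suf_in s_pre s_suf d_pre r_c\<close>)
  then show ?thesis by (simp add: pre_def)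
qed

definition seg :: "'m \<Rightarrow> 'k deg \<Rightarrow> 'k deg \<Rightarrow> 'm" where
  "seg l m n = suf (pre l n) m"

lemma seg_in:
  "l \<in> L \<Longrightarrow> m \<le> n \<Longrightarrow> n \<le> d l \<Longrightarrow> seg l m n \<in> L \<and> d (seg l m n) = dsub n m"
  unfolding seg_def by (simp add: pre_in suf_in d_pre d_suf)

lemma seg_diag: assumes "l \<in> L" "m \<le> d l" shows "seg l m m = s (pre l m)"
proof -
  have "factor (pre l m) m = (pre l m, s (pre l m))"
    using assms by (intro factor_unique) (auto simp: pre_in d_pre s_in r_s d_s c_s dsub_self)
  then show ?thesis by (simp add: seg_def suf_def)
qed

lemma r_seg: assumes "l \<in> L" "m \<le> n" "n \<le> d l" shows "r (seg l m n) = seg l m m"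
proof -
  have "r (seg l m n) = s (pre (pre l n) m)"
    unfolding seg_def using assms by (simp add: s_pre pre_in d_pre)
  also have "\<dots> = s (pre l m)" using pre_pre[OF assms] by simp
  also have "\<dots> = seg l m m" using assms by (simp add: seg_diag order_trans[OF assms(2,3)])
  finally show ?thesis .
qed

lemma s_seg: assumes "l \<in> L" "m \<le> n" "n \<le> d l" shows "s (seg l m n) = seg l n n"
proof -
  have "s (seg l m n) = s (pre l n)" unfolding seg_def using assms by (simp add: s_suf pre_in d_pre)
  then show ?thesis using seg_diag[OF assms(1,3)] by simp
qed

lemma c_seg_seg:
  assumes "l \<in> L" "m \<le> n" "n \<le> p" "p \<le> d l"
  shows "c (seg l m n) (seg l n p) = seg l m p"
proof -
  define q where "q = pre l p"
  have q: "q \<in> L" "d q = p" using assms by (auto simp: q_def pre_in d_pre)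
  have "pre q n = pre l n" using pre_pre[OF assms(1,3,4)] by (simp add: q_def)
  then have "seg l m n = suf (pre q n) m" by (simp add: seg_def)
  moreover have "suf q m = c (suf (pre q n) m) (suf q n)" using pre_pre[of q m n] q assms by simp
  ultimately show ?thesis by (simp add: seg_def q_def)
qed

lemma seg_c:
  "l \<in> L \<Longrightarrow> \<mu> \<in> L \<Longrightarrow> s l = r \<mu> \<Longrightarrow> n \<le> d l \<Longrightarrow> seg (c l \<mu>) m n = seg l m n"
  by (simp add: seg_def pre_c)

text \<open>The path is the union of a chain of paths \<lambda>_j of degree (j, ..., j), each extending
  the previous one by a path of degree (1, ..., 1) whose source stays in Q.\<close>
lemma infinite_path_through:
  assumes w: "w \<in> vertices L d" "Q w"
    and extend: "\<And>u. u \<in> vertices L d \<Longrightarrow> Q u \<Longrightarrow> \<exists>l\<in>L. r l = u \<and> d l = (\<lambda>i. 1) \<and> Q (s l)"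
    and pull_back: "\<And>l. l \<in> L \<Longrightarrow> Q (s l) \<Longrightarrow> Q (r l)"
  shows "\<exists>x. infinite_path L r s c d x \<and> (\<forall>m. Q (x m m))"
proof -
  define e where "e u = (SOME l. l \<in> L \<and> r l = u \<and> d l = (\<lambda>i. 1) \<and> Q (s l))" for u
  have e: "e u \<in> L \<and> r (e u) = u \<and> d (e u) = (\<lambda>i. 1) \<and> Q (s (e u))"
    if "u \<in> vertices L d" "Q u" for u
    using extend[OF that] unfolding e_def by (rule someI2_bex) blast
  define lam where "lam = rec_nat w (\<lambda>j l. c l (e (s l)))"
  have lam_Suc: "lam (Suc j) = c (lam j) (e (s (lam j)))" for j
    by (simp add: lam_def)
  have lam: "lam j \<in> L \<and> d (lam j) = (\<lambda>i. j) \<and> Q (s (lam j))" for j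
  proof (induction j)
    case 0
    then show ?case using w degree_zero_is_vertex[of w] by (auto simp: lam_def vertices_iff dzero_def)
  next
    case (Suc j)
    note ej = e[OF s_vertex conjunct2[OF conjunct2[OF Suc]]]
    show ?case using Suc ej by (simp add: lam_Suc c_in d_c s_c) (simp add: dadd_def)
  qed
  have lam_seg_step: "seg (lam (Suc j)) m n = seg (lam j) m n" if "n \<le> (\<lambda>i. j)" for j m n
  proof -
    note ej = e[OF s_vertex conjunct2[OF conjunct2[OF lam]]]
    show ?thesis unfolding lam_Suc using lam[of j] ej that by (intro seg_c) auto
  qed
  have lam_seg: "seg (lam J) m n = seg (lam j) m n" if "n \<le> (\<lambda>i. j)" "j \<le> J" for j J m n
    using that(2)
  proof (induction J rule: dec_induct)
    case (step J)
    have "n \<le> (\<lambda>i. J)" using that(1) step(1) by (auto simp: le_fun_def intro: order_trans)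
    then show ?case using lam_seg_step step.IH by simp
  qed simp
  define N :: "'k deg \<Rightarrow> nat" where "N n = sum n UNIV" for n
  have N_bound: "n \<le> (\<lambda>i. N n)" for n
    by (auto simp: le_fun_def N_def intro: member_le_sum)
  have N_mono: "m \<le> n \<Longrightarrow> N m \<le> N n" for m n
    by (auto simp: N_def le_fun_def intro: sum_mono)
  define x where "x m n = seg (lam (N n)) m n" for m n
  have x_lam: "x m n = seg (lam J) m n" if "N n \<le> J" for m n J
    unfolding x_def using lam_seg[OF N_bound that] by simp
  have le_d_lam: "n \<le> d (lam J)" if "N n \<le> J" for n J
    using N_bound[of n] that lam[of J] by (auto simp: le_fun_def intro: order_trans)
  have "infinite_path L r s c d x"
    unfolding infinite_path_def
  proof (intro conjI allI impI)
    fix m n :: "'k deg" assume mn: "m \<le> n"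
    have J: "N m \<le> N n" using N_mono[OF mn] .
    have l: "lam (N n) \<in> L" "n \<le> d (lam (N n))" using lam le_d_lam by auto
    show "x m n \<in> L" "d (x m n) = dsub n m"
      using seg_in[OF l(1) mn l(2)] by (simp_all add: x_def)
    show "r (x m n) = x m m"
      using r_seg[OF l(1) mn l(2)] x_lam[OF J] by (simp add: x_def)
    show "s (x m n) = x n n"
      using s_seg[OF l(1) mn l(2)] by (simp add: x_def)
  next
    fix m n p :: "'k deg" assume mnp: "m \<le> n \<and> n \<le> p"
    have "N n \<le> N p" using N_mono mnp by auto
    then show "c (x m n) (x n p) = x m p"
      using c_seg_seg[of "lam (N p)" m n p] lam le_d_lam mnp x_lam by (simp add: x_def)
  qed
  moreover have "Q (x m m)" for m
  proof -
    have l: "lam (N m) \<in> L" "m \<le> d (lam (N m))" using lam le_d_lam by auto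
    have "x m m = r (suf (lam (N m)) m)"
      using x_lam[of m "N m" m] seg_diag[OF l] s_pre[OF l] by simp
    moreover have "Q (s (suf (lam (N m)) m))" using s_suf[OF l] lam by simp
    ultimately show ?thesis using pull_back suf_in[OF l] by simp
  qed
  ultimately show ?thesis by blast
qed

lemma cofinal_hereditary_saturated_vertices:
  assumes cof: "kg_cofinal L r s c d"
    and hereditary: "\<And>l. l \<in> L \<Longrightarrow> r l \<in> H \<Longrightarrow> s l \<in> H"
    and saturated: "\<And>u. u \<in> vertices L d \<Longrightarrow>
      (\<And>l. l \<in> L \<Longrightarrow> r l = u \<Longrightarrow> d l = (\<lambda>i. 1) \<Longrightarrow> s l \<in> H) \<Longrightarrow> u \<in> H"
    and v: "v \<in> vertices L d" "v \<in> H"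
  shows "vertices L d \<subseteq> H"
proof
  fix w assume w: "w \<in> vertices L d"
  show "w \<in> H"
  proof (rule ccontr)
    assume "w \<notin> H"
    then obtain x where x: "infinite_path L r s c d x" "\<forall>m. x m m \<notin> H"
      using infinite_path_through[of w "\<lambda>u. u \<notin> H"] w saturated hereditary by blast
    then obtain m l where "l \<in> L" "r l = v" "s l = x m m"
      using cof v(1) unfolding kg_cofinal_def by blast
    then show False using hereditary v(2) x(2) by metis
  qed
qed

section \<open>Vertices annihilated by a central element\<close>

abbreviation eqv :: "('m, 'r::comm_ring_1) fpoly \<Rightarrow> ('m, 'r) fpoly \<Rightarrow> bool" where
  "eqv f g \<equiv> kp_eq L r s c d f g"

lemma valid_gen_P: "v \<in> vertices L d \<Longrightarrow> valid_gen L d (P v)"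
  and valid_gen_S: "l \<in> L \<Longrightarrow> d l \<noteq> dzero \<Longrightarrow> valid_gen L d (S l)"
  and valid_gen_Sst: "l \<in> L \<Longrightarrow> d l \<noteq> dzero \<Longrightarrow> valid_gen L d (Sst l)"
  by (simp_all add: valid_gen_def)

lemma valid_sw: "l \<in> L \<Longrightarrow> \<forall>g\<in>set (sw d l). valid_gen L d g"
  and valid_sstw: "l \<in> L \<Longrightarrow> \<forall>g\<in>set (sstw d l). valid_gen L d g"
  by (simp_all add: sw_def sstw_def valid_gen_def vertices_def)

lemma kp1:
  "v \<in> vertices L d \<Longrightarrow> w \<in> vertices L d \<Longrightarrow>
   eqv (wmono [P v, P w]) (if v = w then wmono [P v] else (\<lambda>_. 0::'r::comm_ring_1))"
  by (rule kp_eq_relation) (auto simp: kp_relations_def)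

lemma kp2_Sst_P:
  "l \<in> L \<Longrightarrow> d l \<noteq> dzero \<Longrightarrow> eqv (wmono [Sst l, P (r l)]) (wmono [Sst l] :: ('m, 'r::comm_ring_1) fpoly)"
  by (rule kp_eq_relation) (auto simp: kp_relations_def)

lemma kp2_S_P:
  "l \<in> L \<Longrightarrow> d l \<noteq> dzero \<Longrightarrow> eqv (wmono [S l, P (s l)]) (wmono [S l] :: ('m, 'r::comm_ring_1) fpoly)"
  by (rule kp_eq_relation) (auto simp: kp_relations_def)

lemma kp2_P_S:
  "l \<in> L \<Longrightarrow> d l \<noteq> dzero \<Longrightarrow> eqv (wmono [P (r l), S l]) (wmono [S l] :: ('m, 'r::comm_ring_1) fpoly)"
  by (rule kp_eq_relation) (auto simp: kp_relations_def)

lemma kp3_Sst_S: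
  "l \<in> L \<Longrightarrow> d l \<noteq> dzero \<Longrightarrow> eqv (wmono [Sst l, S l]) (wmono [P (s l)] :: ('m, 'r::comm_ring_1) fpoly)"
  by (rule kp_eq_relation) (auto simp: kp_relations_def)

lemma kp4:
  "v \<in> vertices L d \<Longrightarrow> n \<noteq> dzero \<Longrightarrow>
   eqv (wmono [P v])
     (psum (\<lambda>l. wmono [S l, Sst l]) {l\<in>L. r l = v \<and> d l = n} :: ('m, 'r::comm_ring_1) fpoly)"
  by (rule kp_eq_relation) (auto simp: kp_relations_def)

lemma sstw_P_zero:
  assumes "b \<in> L" "v \<in> vertices L d" "v \<noteq> r b"
  shows "eqv (wmono (sstw d b @ [P v])) (\<lambda>_. 0::'r::comm_ring_1)"
proof (cases "d b = dzero")
  case True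
  then show ?thesis
    using kp1[of b v] assms degree_zero_is_vertex[of b] by (simp add: sstw_def vertices_iff)
next
  case False
  have "eqv (pmul (wmono [Sst b]) (wmono [P v]))
      (pmul (wmono [Sst b, P (r b)]) (wmono [P v]) :: ('m, 'r) fpoly)"
    using assms
    by (intro kp_eq_pmul_right kp_eq_sym[OF kp2_Sst_P] wmono_single_valid_fpolys valid_gen_P False)
  also have "pmul (wmono [Sst b, P (r b)]) (wmono [P v]) =
      pmul (wmono [Sst b]) (wmono [P (r b), P v] :: ('m, 'r) fpoly)"
    by (simp add: pmul_wmono_wmono)
  also have "eqv \<dots> (pmul (wmono [Sst b]) (\<lambda>_. 0))"
    using kp1[of "r b" v] assms
    by (intro kp_eq_pmul_left) (auto simp: r_vertex wmono_single_valid_fpolys valid_gen_Sst False)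
  finally show ?thesis using False by (simp add: sstw_def pmul_wmono_wmono)
qed

lemma P_sw:
  assumes a: "a \<in> L" and u: "u \<in> vertices L d"
  shows "eqv (pmul (wmono [P u]) (wmono (sw d a)))
    (if u = r a then wmono (sw d a) else (\<lambda>_. 0::'r::comm_ring_1))"
proof (cases "d a = dzero")
  case True
  then have "r a = a" "a \<in> vertices L d" using a degree_zero_is_vertex by (auto simp: vertices_iff)
  then show ?thesis using kp1[OF u, of a] True by (cases "u = a") (simp_all add: sw_def pmul_wmono_wmono)
next
  case False
  have vS: "valid_gen L d (S a)" using a False by (rule valid_gen_S)
  have "eqv (pmul (wmono [P u]) (wmono [S a]))
      (pmul (wmono [P u]) (wmono [P (r a), S a]) :: ('m, 'r) fpoly)"
    using a u False
    by (intro kp_eq_pmul_left kp_eq_sym[OF kp2_P_S] wmono_single_valid_fpolys valid_gen_P)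
  also have "pmul (wmono [P u]) (wmono [P (r a), S a]) =
      pmul (wmono [P u, P (r a)]) (wmono [S a] :: ('m, 'r) fpoly)"
    by (simp add: pmul_wmono_wmono)
  also have "eqv \<dots> (pmul (if u = r a then wmono [P u] else (\<lambda>_. 0)) (wmono [S a]))"
    by (rule kp_eq_pmul_right[OF kp1[OF u r_vertex[OF a]] wmono_single_valid_fpolys[OF vS]])
  also have "pmul (if u = r a then wmono [P u] else (\<lambda>_. 0)) (wmono [S a]) =
      (if u = r a then wmono [P (r a), S a] else (\<lambda>_. 0::'r))"
    by (simp add: pmul_wmono_wmono)
  also have "eqv \<dots> (if u = r a then wmono [S a] else (\<lambda>_. 0))"
    using kp2_P_S[OF a False] by (cases "u = r a") (simp_all add: kp_eq_refl)
  finally show ?thesis unfolding sw_def by (simp only: False if_False)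
qed

definition normal_sum :: "('m \<times> 'm \<Rightarrow> 'r::comm_ring_1) \<Rightarrow> ('m \<times> 'm) set \<Rightarrow> ('m, 'r) fpoly" where
  "normal_sum coef F = psum (\<lambda>p. psmult (coef p) (wmono (sw d (fst p) @ sstw d (snd p)))) F"

lemma normal_sum_P_zero:
  assumes F: "F \<subseteq> L \<times> L" "finite F" and v: "v \<in> vertices L d" "\<forall>p\<in>F. v \<noteq> r (snd p)"
  shows "eqv (pmul (normal_sum coef F) (wmono [P v])) (\<lambda>_. 0::'r::comm_ring_1)"
proof -
  have "eqv (pmul (normal_sum coef F) (wmono [P v]))
      (psum (\<lambda>p. psmult (coef p) (pmul (wmono (sw d (fst p))) (wmono (sstw d (snd p) @ [P v])))) F)"
    by (simp add: normal_sum_def pmul_psum_left pmul_psmult_left pmul_wmono_wmono kp_eq_refl)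
  also have "eqv \<dots> (psum (\<lambda>p. psmult (coef p) (pmul (wmono (sw d (fst p))) (\<lambda>_. 0))) F)"
  proof (intro kp_eq_psum kp_eq_psmult kp_eq_pmul_left)
    fix p assume "p \<in> F"
    then show "eqv (wmono (sstw d (snd p) @ [P v])) (\<lambda>_. 0::'r)"
      using sstw_P_zero[of "snd p" v] F v by auto
    show "(wmono (sw d (fst p)) :: ('m, 'r) fpoly) \<in> valid_fpolys L d"
      using \<open>p \<in> F\<close> F by (intro wmono_valid_fpolys valid_sw) auto
  qed (use F in simp)
  finally show ?thesis by (simp add: psmult_def psum_def)
qed

lemma normal_sum_vertex_expansion:
  assumes F: "F \<subseteq> L \<times> L" "finite F"
  shows "eqv (normal_sum coef F)
    (psum (\<lambda>u. pmul (wmono [P u]) (normal_sum coef F)) ((\<lambda>p. r (fst p)) ` F)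
      :: ('m, 'r::comm_ring_1) fpoly)"
proof -
  define T where "T p = (wmono (sw d (fst p) @ sstw d (snd p)) :: ('m, 'r) fpoly)" for p
  define U where "U = (\<lambda>p. r (fst p)) ` F"
  have U: "finite U" "U \<subseteq> vertices L d" using F by (auto simp: U_def r_vertex)
  have "normal_sum coef F =
      psum (\<lambda>p. psmult (coef p) (psum (\<lambda>u. if u = r (fst p) then T p else (\<lambda>_. 0)) U)) F"
    unfolding normal_sum_def T_def
  proof (rule psum_cong)
    fix p assume "p \<in> F"
    then have pU: "r (fst p) \<in> U" by (simp add: U_def)
    show "psmult (coef p) (wmono (sw d (fst p) @ sstw d (snd p))) = psmult (coef p)
        (psum (\<lambda>u. if u = r (fst p) then wmono (sw d (fst p) @ sstw d (snd p)) else (\<lambda>_. 0)) U)"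
      by (simp only: psum_delta[OF U(1) pU])
  qed
  then have "eqv (normal_sum coef F)
      (psum (\<lambda>p. psmult (coef p) (psum (\<lambda>u. if u = r (fst p) then T p else (\<lambda>_. 0)) U)) F)"
    by (simp add: kp_eq_refl)
  also have "eqv \<dots> (psum (\<lambda>p. psmult (coef p) (psum (\<lambda>u. pmul (wmono [P u]) (T p)) U)) F)"
  proof (intro kp_eq_psum kp_eq_psmult)
    fix p u assume p: "p \<in> F" and u: "u \<in> U"
    have a: "fst p \<in> L" "snd p \<in> L" using p F by auto
    have "eqv (pmul (wmono [P u]) (T p))
        (pmul (pmul (wmono [P u]) (wmono (sw d (fst p)))) (wmono (sstw d (snd p))))"
      by (simp add: T_def pmul_wmono_assoc kp_eq_refl flip: pmul_wmono_wmono)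
    also have "eqv \<dots>
        (pmul (if u = r (fst p) then wmono (sw d (fst p)) else (\<lambda>_. 0)) (wmono (sstw d (snd p))))"
      using a u U by (intro kp_eq_pmul_right P_sw wmono_valid_fpolys valid_sstw) auto
    also have "\<dots> = (if u = r (fst p) then T p else (\<lambda>_. 0))"
      by (simp add: T_def pmul_wmono_wmono)
    finally show "eqv (if u = r (fst p) then T p else (\<lambda>_. 0)) (pmul (wmono [P u]) (T p))"
      by (rule kp_eq_sym)
  qed (use F U in simp_all)
  also have "psum (\<lambda>p. psmult (coef p) (psum (\<lambda>u. pmul (wmono [P u]) (T p)) U)) F =
      psum (\<lambda>u. pmul (wmono [P u]) (normal_sum coef F)) U"
    unfolding normal_sum_def T_def pmul_psum_right pmul_psmult_right by (rule psum_psmult_psum_swap)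
  finally show ?thesis by (simp add: U_def)
qed

definition annihilated_vertices :: "('m, 'r::comm_ring_1) fpoly \<Rightarrow> 'm set" where
  "annihilated_vertices f = {u \<in> vertices L d. eqv (pmul (wmono [P u]) f) (\<lambda>_. 0)}"

text \<open>Centrality gives p_s(\<lambda>) f = s_\<lambda>* s_\<lambda> f = s_\<lambda>* p_r(\<lambda>) f s_\<lambda>.\<close>
lemma annihilated_vertices_hereditary:
  assumes cen: "kp_central L r s c d f" and f: "f \<in> valid_fpolys L d"
    and l: "l \<in> L" "r l \<in> annihilated_vertices f"
  shows "s l \<in> annihilated_vertices (f::('m, 'r::comm_ring_1) fpoly)"
proof (cases "d l = dzero")
  case True
  then show ?thesis using degree_zero_is_vertex[OF l(1) True] l by simp
next
  case False
  have vS: "valid_gen L d (S l)" and vSst: "valid_gen L d (Sst l)"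
    using l False by (auto simp: valid_gen_S valid_gen_Sst)
  note valid = wmono_single_valid_fpolys[OF vS] wmono_single_valid_fpolys[OF vSst]
  have "eqv (pmul (wmono [P (s l)]) f) (pmul (wmono [Sst l]) (pmul (wmono [S l]) f))"
    by (simp add: kp_eq_pmul_right[OF kp_eq_sym[OF kp3_Sst_S[OF l(1) False]] f] pmul_wmono_assoc_left)
  also have "eqv \<dots> (pmul (wmono [Sst l]) (pmul f (wmono [S l])))"
    by (rule kp_eq_pmul_left[OF kp_eq_sym[OF kp_central_gen[OF cen vS]] valid(2)])
  also have "eqv \<dots> (pmul (wmono [Sst l, P (r l)]) (pmul f (wmono [S l])))"
    using f valid by (intro kp_eq_pmul_right kp_eq_sym[OF kp2_Sst_P[OF l(1) False]] pmul_valid_fpolys)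
  also have "\<dots> = pmul (pmul (wmono [Sst l]) (pmul (wmono [P (r l)]) f)) (wmono [S l])"
    by (simp add: pmul_wmono_assoc_left pmul_wmono_assoc flip: pmul_wmono_wmono)
  also have "eqv \<dots> (pmul (pmul (wmono [Sst l]) (\<lambda>_. 0)) (wmono [S l]))"
    using l(2) valid by (intro kp_eq_pmul_right kp_eq_pmul_left) (auto simp: annihilated_vertices_def)
  finally show ?thesis using l by (simp add: annihilated_vertices_def s_vertex)
qed

text \<open>By (KP4) and centrality, p_u f = \<Sum> s_\<lambda> s_\<lambda>* f = \<Sum> s_\<lambda> p_s(\<lambda>) f s_\<lambda>*.\<close>
lemma annihilated_vertices_saturated:
  assumes cen: "kp_central L r s c d f" and f: "f \<in> valid_fpolys L d"
    and u: "u \<in> vertices L d" and n: "n \<noteq> dzero" and fin: "finite {l\<in>L. r l = u \<and> d l = n}"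
    and sources: "\<forall>l\<in>{l\<in>L. r l = u \<and> d l = n}. s l \<in> annihilated_vertices f"
  shows "u \<in> annihilated_vertices (f::('m, 'r::comm_ring_1) fpoly)"
proof -
  let ?E = "{l\<in>L. r l = u \<and> d l = n}"
  have "eqv (pmul (wmono [P u]) f) (psum (\<lambda>l. pmul (wmono [S l, Sst l]) f) ?E)"
    using kp_eq_pmul_right[OF kp4[OF u n] f] by (simp add: pmul_psum_left)
  also have "eqv \<dots> (psum (\<lambda>_ _. 0) ?E)"
  proof (rule kp_eq_psum[OF fin])
    fix l assume lE: "l \<in> ?E"
    then have l: "l \<in> L" "d l \<noteq> dzero" using n by auto
    have vS: "valid_gen L d (S l)" and vSst: "valid_gen L d (Sst l)"
      using l by (auto simp: valid_gen_S valid_gen_Sst)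
    note valid = wmono_single_valid_fpolys[OF vS] wmono_single_valid_fpolys[OF vSst]
    have "eqv (pmul (wmono [S l, Sst l]) f) (pmul (wmono [S l]) (pmul f (wmono [Sst l])))"
      using kp_eq_pmul_left[OF kp_eq_sym[OF kp_central_gen[OF cen vSst]] valid(1)]
      by (simp add: pmul_wmono_assoc_left)
    also have "eqv \<dots> (pmul (wmono [S l, P (s l)]) (pmul f (wmono [Sst l])))"
      using f valid by (intro kp_eq_pmul_right kp_eq_sym[OF kp2_S_P[OF l]] pmul_valid_fpolys)
    also have "\<dots> = pmul (pmul (wmono [S l]) (pmul (wmono [P (s l)]) f)) (wmono [Sst l])"
      by (simp add: pmul_wmono_assoc_left pmul_wmono_assoc flip: pmul_wmono_wmono)
    also have "eqv \<dots> (pmul (pmul (wmono [S l]) (\<lambda>_. 0)) (wmono [Sst l]))"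
      using sources lE valid
      by (intro kp_eq_pmul_right kp_eq_pmul_left) (auto simp: annihilated_vertices_def)
    finally show "eqv (pmul (wmono [S l, Sst l]) f) (\<lambda>_. 0)" by simp
  qed
  finally show ?thesis using u by (simp add: annihilated_vertices_def)
qed

lemma normal_sum_zero_if_vertices_annihilate:
  assumes F: "F \<subseteq> L \<times> L" "finite F" and f: "eqv f (normal_sum coef F)"
    and annihilated: "vertices L d \<subseteq> annihilated_vertices f"
  shows "eqv f (\<lambda>_. 0::'r::comm_ring_1)"
proof -
  have "eqv f (psum (\<lambda>u. pmul (wmono [P u]) (normal_sum coef F)) ((\<lambda>p. r (fst p)) ` F))"
    using f normal_sum_vertex_expansion[OF F] by (rule kp_eq_trans)
  also have "eqv \<dots> (psum (\<lambda>_ _. 0) ((\<lambda>p. r (fst p)) ` F))"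
  proof (rule kp_eq_psum)
    fix u assume "u \<in> (\<lambda>p. r (fst p)) ` F"
    then have u: "u \<in> vertices L d" using F by (auto simp: r_vertex)
    have "eqv (pmul (wmono [P u]) (normal_sum coef F)) (pmul (wmono [P u]) f)"
      by (rule kp_eq_pmul_left[OF kp_eq_sym[OF f] wmono_single_valid_fpolys[OF valid_gen_P[OF u]]])
    also have "eqv \<dots> (\<lambda>_. 0)" using annihilated u by (auto simp: annihilated_vertices_def)
    finally show "eqv (pmul (wmono [P u]) (normal_sum coef F)) (\<lambda>_. 0)" .
  qed (use F in simp)
  finally show ?thesis by simp
qed

end

theorem lemma4p4:
  fixes L :: "'m set" and r s :: "'m \<Rightarrow> 'm" and c :: "'m \<Rightarrow> 'm \<Rightarrow> 'm"
    and d :: "'m \<Rightarrow> ('k::finite \<Rightarrow> nat)"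
    and f :: "('m, 'R::comm_ring_1) fpoly"
    and F :: "('m \<times> 'm) set" and coef :: "'m \<times> 'm \<Rightarrow> 'R"
  assumes kg: "is_kgraph L r s c d"
    and rf: "row_finite L r d" and ns: "no_sources L r d" and cof: "kg_cofinal L r s c d"
    and a_elem: "f \<in> free_elems L d"
    and a_nonzero: "\<not> kp_eq L r s c d f (\<lambda>_. 0)"
    and a_central: "kp_central L r s c d f"
    and F_fin: "finite F"
    and F_sub: "F \<subseteq> L \<times> L"
    and F_deg: "\<exists>m. \<forall>p\<in>F. d (snd p) = m"
    and F_src: "\<forall>p\<in>F. s (fst p) = s (snd p)"
    and F_coef: "\<forall>p\<in>F. coef p \<noteq> 0"
    and normal: "kp_eq L r s c d f
                   (psum (\<lambda>p. psmult (coef p) (wmono (sw d (fst p) @ sstw d (snd p)))) F)"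
  shows "{v \<in> vertices L d. \<exists>p\<in>F. v = r (snd p)} = vertices L d"
proof -
  (* Neither no_sources nor the degree, source and coefficient conditions on F are needed. *)
  interpret kgraph L r s c d by (rule kgraph.intro[OF kg])
  let ?H = "annihilated_vertices f"
  have f: "f \<in> valid_fpolys L d" using a_elem free_elems_subset_valid_fpolys by blast
  have normal_sum: "eqv f (normal_sum coef F)" using normal by (simp add: normal_sum_def)
  have "\<exists>p\<in>F. v = r (snd p)" if v: "v \<in> vertices L d" for v
  proof (rule ccontr)
    assume "\<not> (\<exists>p\<in>F. v = r (snd p))"
    then have "eqv (pmul f (wmono [P v])) (\<lambda>_. 0)"
      using kp_eq_pmul_right[OF normal_sum wmono_single_valid_fpolys[OF valid_gen_P[OF v]]]
        normal_sum_P_zero[OF F_sub F_fin v] by (blast intro: kp_eq_trans)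
    then have "v \<in> ?H"
      using kp_central_gen[OF a_central valid_gen_P[OF v]] v
      by (auto simp: annihilated_vertices_def intro: kp_eq_trans kp_eq_sym)
    moreover have "u \<in> ?H" if "u \<in> vertices L d"
      and "\<And>l. l \<in> L \<Longrightarrow> r l = u \<Longrightarrow> d l = (\<lambda>i. 1) \<Longrightarrow> s l \<in> ?H" for u
      using annihilated_vertices_saturated[OF a_central f that(1), of "\<lambda>i. 1"] that rf
      by (auto simp: row_finite_def dzero_def fun_eq_iff)
    ultimately have "vertices L d \<subseteq> ?H"
      using cofinal_hereditary_saturated_vertices[OF cof] annihilated_vertices_hereditary[OF a_central f] v
      by blast
    then show False
      using normal_sum_zero_if_vertices_annihilate[OF F_sub F_fin normal_sum] a_nonzero by blast
  qed
  then show ?thesis by blast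
qed

end
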